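(* Let $A$ be a Nakayama algebra of finite global dimension. Then the magnitude $m_A$ equals the number of simple $A$-modules of even projective dimension, and also equals the number of vertices lying on a cycle in the resolution quiver of $A$.
   Context: Nakayama algebras are connected finite-dimensional algebras over an algebraically closed field $K$ all of whose indecomposable modules are uniserial, given as bound quiver algebras on a linear quiver $0\to\cdots\to n-1$ or cyclic quiver $0\to\cdots\to n-1\to 0$ with admissible relations; the Kupisch series is $[c_0,\dots,c_{n-1}]$ with $c_i=\dim_K e_iA$. The Cartan matrix $\mathbf C_A$ has entries $\dim_K e_iAe_j$; for $A$ of finite global dimension it is invertible, and the magnitude $m_A$ is the sum of all entries of $\mathbf C_A^{-1}$. The resolution quiver of $A$ has vertex set $\mathbb Z/n\mathbb Z$ and an arrow $i\to j$ whenever $j\equiv i+c_i \pmod n$. *)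

theory Defs
  imports "Jordan_Normal_Form.Matrix"
begin

text \<open>A Nakayama algebra with n simple modules (vertices 0,...,n-1) is encoded by its
Kupisch series c 0, ..., c (n-1), where c i = dim e_i A.  Conventions (arrows i -> i+1):
the indecomposable projective e_i A is uniserial with composition factors
S_i, S_(i+1), ..., S_(i + c i - 1) (indices mod n).\<close>

definition kupisch_linear :: "nat \<Rightarrow> (nat \<Rightarrow> nat) \<Rightarrow> bool" where
  "kupisch_linear n c \<longleftrightarrow> n \<ge> 1 \<and> c (n - 1) = 1 \<and>
     (\<forall>i < n - 1. c i \<ge> 2 \<and> c (Suc i) + 1 \<ge> c i)"

definition kupisch_cyclic :: "nat \<Rightarrow> (nat \<Rightarrow> nat) \<Rightarrow> bool" where
  "kupisch_cyclic n c \<longleftrightarrow> n \<ge> 1 \<and>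
     (\<forall>i < n. c i \<ge> 2 \<and> c (Suc i mod n) + 1 \<ge> c i)"

definition nakayama_kupisch :: "nat \<Rightarrow> (nat \<Rightarrow> nat) \<Rightarrow> bool" where
  "nakayama_kupisch n c \<longleftrightarrow> kupisch_linear n c \<or> kupisch_cyclic n c"

text \<open>Cartan matrix: entry (i,j) = dim e_i A e_j = multiplicity of S_j in e_i A.\<close>
definition cartan :: "nat \<Rightarrow> (nat \<Rightarrow> nat) \<Rightarrow> rat mat" where
  "cartan n c = mat n n (\<lambda>(i, j). of_nat (card {k. k < c i \<and> (i + k) mod n = j}))"

definition magnitude :: "nat \<Rightarrow> (nat \<Rightarrow> nat) \<Rightarrow> rat" where
  "magnitude n c = (let B = (SOME B. B \<in> carrier_mat n n \<and> inverts_mat (cartan n c) B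
                                  \<and> inverts_mat B (cartan n c))
                    in \<Sum>i<n. \<Sum>j<n. B $$ (i, j))"

text \<open>Indecomposable modules are the uniserial modules M(i,l) with top S_i and length l,
1 <= l <= c i; the pair (i,0) represents the zero module.  The projective cover of M(i,l)
is e_i A = M(i, c i), and the syzygy is Omega M(i,l) = M(i+l mod n, c i - l).\<close>
definition syzygy :: "nat \<Rightarrow> (nat \<Rightarrow> nat) \<Rightarrow> nat \<times> nat \<Rightarrow> nat \<times> nat" where
  "syzygy n c M = (case M of (i, l) \<Rightarrow>
      if l = 0 then (i, 0) else ((i + l) mod n, c i - l))"

definition pd_le :: "nat \<Rightarrow> (nat \<Rightarrow> nat) \<Rightarrow> nat \<times> nat \<Rightarrow> nat \<Rightarrow> bool" where
  "pd_le n c M d \<longleftrightarrow> snd ((syzygy n c ^^ Suc d) M) = 0"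

definition proj_dim :: "nat \<Rightarrow> (nat \<Rightarrow> nat) \<Rightarrow> nat \<times> nat \<Rightarrow> nat" where
  "proj_dim n c M = (LEAST d. pd_le n c M d)"

definition finite_gldim :: "nat \<Rightarrow> (nat \<Rightarrow> nat) \<Rightarrow> bool" where
  "finite_gldim n c \<longleftrightarrow> (\<exists>d. \<forall>i < n. \<forall>l \<in> {1..c i}. pd_le n c (i, l) d)"

text \<open>Simple module S_i = M(i,1).\<close>
definition simples_even_pd :: "nat \<Rightarrow> (nat \<Rightarrow> nat) \<Rightarrow> nat set" where
  "simples_even_pd n c = {i. i < n \<and> even (proj_dim n c (i, 1))}"

text \<open>Resolution quiver: vertex set Z/nZ (represented by 0..n-1), arrow i -> (i + c i) mod n.\<close>
definition res_map :: "nat \<Rightarrow> (nat \<Rightarrow> nat) \<Rightarrow> nat \<Rightarrow> nat" where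
  "res_map n c i = (i + c i) mod n"

definition cyclic_vertices :: "nat \<Rightarrow> (nat \<Rightarrow> nat) \<Rightarrow> nat set" where
  "cyclic_vertices n c = {i. i < n \<and> (\<exists>k \<ge> 1. (res_map n c ^^ k) i = i)}"

end

theory Submission
  imports Defs "Jordan_Normal_Form.Determinant"
begin

text \<open>Pass to the cover \<open>\<nat> \<rightarrow> \<int>/n\<int>\<close>, \<open>x \<mapsto> x mod n\<close>, on which the resolution map lifts to the
monotone map \<open>res_lift x = x + c (x mod n)\<close>. The module with top \<open>S\<^bsub>x mod n\<^esub>\<close> and length
\<open>y - x\<close> is the interval \<open>[x, y)\<close>, with projective cover \<open>[x, res_lift x)\<close> and syzygy
\<open>[y, res_lift x)\<close>. Hence the minimal projective resolution of \<open>S\<^bsub>a\<^esub>\<close> is read off the sequence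
\<open>a, a + 1, res_lift a, res_lift (a + 1), \<dots>\<close>, and finite global dimension means that this
sequence stalls. The alternating sums of the projective covers in these resolutions form the
inverse of the Cartan matrix; row \<open>a\<close> sums to 1 or 0 according to the parity of the length of
the resolution, which gives the first count.

Reading \<open>C C\<^sup>-\<^sup>1 = 1\<close> row by row, every window \<open>[x, res_lift x)\<close> contains exactly one lift of a
simple of even projective dimension. Under finite global dimension the lifts of cyclic vertices
form a single orbit of \<open>res_lift\<close>, which runs from a lift \<open>v\<close> to \<open>v + n\<close> in as many steps as there
are cyclic vertices; counting the windows crossed on the way gives the second count.\<close>

lemma sum_neg_one_power_lessThan: "(\<Sum>t<K. (-1::'a::ring_1) ^ t) = (if odd K then 1 else 0)"
  by (induction K) auto

lemma sum_alternating_telescope: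
  fixes g :: "nat \<Rightarrow> 'a::comm_ring_1"
  shows "(\<Sum>t<K. (-1) ^ t * (g t + g (Suc t))) = g 0 - (-1) ^ K * g K"
  by (induction K) (auto simp: algebra_simps)

lemma of_nat_card_filter_eq_sum:
  "finite A \<Longrightarrow> (of_nat (card {x\<in>A. P x}) :: 'a::semiring_1) = (\<Sum>x\<in>A. if P x then 1 else 0)"
  using sum.inter_filter[of A "\<lambda>_. 1::'a" P] by simp

lemma exists_crossing_nat:
  assumes "a \<le> b" "P a" "\<not> P b"
  shows "\<exists>i. a \<le> i \<and> i < b \<and> P i \<and> \<not> P (Suc i)"
  using assms
proof (induction b rule: dec_induct)
  case (step b)
  then show ?case by (cases "P b") (auto intro: less_SucI)
qed simp

lemma bij_betw_mod_interval:
  assumes "0 < (n::nat)"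
  shows "bij_betw (\<lambda>s. s mod n) {a..<a + n} {..<n}"
proof -
  have inj: "inj_on (\<lambda>s. s mod n) {a..<a + n}"
  proof (rule inj_onI)
    have "x = y" if "x \<in> {a..<a + n}" "y \<in> {a..<a + n}" "x mod n = y mod n" "x \<le> y" for x y
    proof -
      have "n dvd y - x" using mod_eq_dvd_iff_nat[OF that(4)] that(3) by metis
      moreover have "y - x < n" using that by auto
      ultimately show ?thesis using that(4) nat_dvd_not_less by fastforce
    qed
    then show "x = y" if "x \<in> {a..<a + n}" "y \<in> {a..<a + n}" "x mod n = y mod n" for x y
      using that by (metis nat_le_linear)
  qed
  moreover have "(\<lambda>s. s mod n) ` {a..<a + n} = {..<n}"
    by (rule card_subset_eq) (use assms inj in \<open>auto simp: card_image\<close>)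
  ultimately show ?thesis by (simp add: bij_betw_def)
qed

lemma funpow_mult_fixpoint: "(f ^^ p) x = x \<Longrightarrow> (f ^^ (p * m)) x = x"
  by (induction m) (simp_all add: funpow_add)

lemma funpow_eq_periodic_points:
  assumes "(f ^^ p) x = x" "(f ^^ q) y = y" "1 \<le> p" "1 \<le> q"
    and "(f ^^ k) x = (f ^^ k) y"
  shows "x = y"
proof -
  define M where "M = p * q * k"
  have "1 \<le> p * q" using assms(3,4) by simp
  then have "k \<le> M" using mult_le_mono1[of 1 "p * q" k] by (simp add: M_def)
  then have shift: "(f ^^ M) z = (f ^^ (M - k)) ((f ^^ k) z)" for z
    by (metis comp_apply funpow_add le_add_diff_inverse2)
  have "x = (f ^^ M) x"
    using funpow_mult_fixpoint[OF assms(1), of "q * k"] by (simp add: M_def mult.assoc)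
  also have "\<dots> = (f ^^ M) y" using shift assms(5) by simp
  also have "\<dots> = y"
    using funpow_mult_fixpoint[OF assms(2), of "p * k"] by (simp add: M_def ac_simps)
  finally show ?thesis .
qed

lemma exists_periodic_point:
  fixes f :: "nat \<Rightarrow> nat"
  assumes "0 < n" "\<And>i. i < n \<Longrightarrow> f i < n"
  shows "\<exists>r<n. \<exists>k\<ge>1. (f ^^ k) r = r"
proof -
  let ?orb = "\<lambda>k. (f ^^ k) 0"
  have orb_lt: "?orb k < n" for k by (induction k) (simp_all add: assms)
  have "\<not> inj_on ?orb {..n}"
  proof
    assume "inj_on ?orb {..n}"
    then have "card {..n} \<le> card {..<n}" by (rule card_inj_on_le) (auto simp: orb_lt)
    then show False by simp
  qed
  then obtain a b where "a < b" "?orb a = ?orb b"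
    unfolding inj_on_def by (metis linorder_neqE_nat)
  then have "(f ^^ (b - a)) (?orb a) = ?orb a"
    by (metis comp_apply funpow_add le_add_diff_inverse2 less_imp_le)
  then show ?thesis
    using orb_lt[of a] \<open>a < b\<close> by (intro exI[of _ "?orb a"]) (auto intro!: exI[of _ "b - a"])
qed

lemma some_inverse_mat_eq:
  fixes A B :: "'a::semiring_1 mat"
  assumes A: "A \<in> carrier_mat n n" and B: "B \<in> carrier_mat n n"
    and AB: "A * B = 1\<^sub>m n" and BA: "B * A = 1\<^sub>m n"
  shows "(SOME B'. B' \<in> carrier_mat n n \<and> inverts_mat A B' \<and> inverts_mat B' A) = B"
proof (rule some_equality)
  show "B \<in> carrier_mat n n \<and> inverts_mat A B \<and> inverts_mat B A"
    using assms by (simp add: inverts_mat_def)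
next
  fix B' assume "B' \<in> carrier_mat n n \<and> inverts_mat A B' \<and> inverts_mat B' A"
  then have B': "B' \<in> carrier_mat n n" and B'A: "B' * A = 1\<^sub>m n"
    by (auto simp: inverts_mat_def)
  have "B' = B' * (A * B)" using AB B' by simp
  also have "\<dots> = (B' * A) * B" using A B B' by (simp add: assoc_mult_mat)
  also have "\<dots> = B" using B'A B by simp
  finally show "B' = B" .
qed

text \<open>Linear Kupisch series are covered too: since \<open>c (n - 1) = 1\<close>, reading their indices modulo
\<open>n\<close> is harmless.\<close>

locale kupisch_series =
  fixes n :: nat and c :: "nat \<Rightarrow> nat"
  assumes n_pos: "0 < n"
    and c_pos: "i < n \<Longrightarrow> 1 \<le> c i"
    and c_le_Suc: "i < n \<Longrightarrow> c i \<le> c (Suc i mod n) + 1"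

lemma kupisch_series_if_nakayama_kupisch:
  assumes "nakayama_kupisch n c"
  shows "kupisch_series n c"
proof -
  have n: "0 < n"
    using assms by (auto simp: nakayama_kupisch_def kupisch_linear_def kupisch_cyclic_def)
  have bounds: "1 \<le> c i \<and> c i \<le> c (Suc i mod n) + 1" if i: "i < n" for i
  proof -
    consider "kupisch_linear n c" "i = n - 1" | "kupisch_linear n c" "i < n - 1"
      | "kupisch_cyclic n c"
      using assms i unfolding nakayama_kupisch_def by (cases "i < n - 1") auto
    then show ?thesis
    proof cases
      case 1
      then show ?thesis by (simp add: kupisch_linear_def)
    next
      case 2
      moreover have "Suc i mod n = Suc i" using 2(2) by simp
      ultimately show ?thesis by (auto simp: kupisch_linear_def)
    next
      case 3
      then have "2 \<le> c i \<and> c i \<le> c (Suc i mod n) + 1"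
        using i unfolding kupisch_cyclic_def by simp
      then show ?thesis by simp
    qed
  qed
  show ?thesis unfolding kupisch_series_def using n bounds by simp
qed

context kupisch_series
begin

definition res_lift :: "nat \<Rightarrow> nat" where
  "res_lift x = x + c (x mod n)"

lemma less_res_lift: "x < res_lift x"
  using c_pos[of "x mod n"] n_pos by (simp add: res_lift_def)

lemma mono_res_lift: "mono res_lift"
  unfolding mono_iff_le_Suc
proof
  fix x
  have "Suc x mod n = Suc (x mod n) mod n" by (simp add: mod_Suc_eq)
  then show "res_lift x \<le> res_lift (Suc x)"
    using c_le_Suc[of "x mod n"] n_pos by (simp add: res_lift_def)
qed

lemma res_lift_mod: "res_lift x mod n = res_map n c (x mod n)"
  by (simp add: res_lift_def res_map_def mod_add_left_eq)

lemma funpow_res_lift_mod: "(res_lift ^^ k) x mod n = (res_map n c ^^ k) (x mod n)"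
  by (induction k) (simp_all add: res_lift_mod)

lemma funpow_res_lift_add_mult: "(res_lift ^^ k) (x + t * n) = (res_lift ^^ k) x + t * n"
  by (induction k) (simp_all add: res_lift_def)

lemma le_funpow_res_lift: "x + k \<le> (res_lift ^^ k) x"
proof (induction k)
  case (Suc k)
  then show ?case using less_res_lift[of "(res_lift ^^ k) x"] by simp
qed simp

lemma strict_mono_funpow_res_lift: "strict_mono (\<lambda>k. (res_lift ^^ k) x)"
  by (simp add: strict_mono_Suc_iff less_res_lift)

lemma syzygy_zero: "syzygy n c (i, 0) = (i, 0)"
  by (simp add: syzygy_def)

lemma syzygy_interval:
  assumes "x < y"
  shows "syzygy n c (x mod n, y - x) = (y mod n, res_lift x - y)"
proof -
  have "(x mod n + (y - x)) mod n = (x + (y - x)) mod n" by (rule mod_add_left_eq)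
  then have "(x mod n + (y - x)) mod n = y mod n" using assms by simp
  then show ?thesis using assms by (simp add: syzygy_def res_lift_def)
qed

text \<open>\<open>\<Omega>\<^sup>t S\<^bsub>a mod n\<^esub>\<close> is the interval \<open>[syz_seq a t, syz_seq a (t + 1))\<close> until it vanishes.\<close>

fun syz_seq :: "nat \<Rightarrow> nat \<Rightarrow> nat" where
  "syz_seq a 0 = a"
| "syz_seq a (Suc 0) = Suc a"
| "syz_seq a (Suc (Suc t)) = res_lift (syz_seq a t)"

lemma syz_seq_mono: "syz_seq a t \<le> syz_seq a (Suc t)"
  by (induction a t rule: syz_seq.induct)
    (simp_all add: Suc_leI less_res_lift monoD[OF mono_res_lift])

lemma syz_seq_double: "syz_seq a (2 * k) = (res_lift ^^ k) a"
  and syz_seq_double_Suc: "syz_seq a (Suc (2 * k)) = (res_lift ^^ k) (Suc a)"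
proof (induction k)
  case (Suc k)
  have "2 * Suc k = Suc (Suc (2 * k))" by simp
  then show "syz_seq a (2 * Suc k) = (res_lift ^^ Suc k) a"
    and "syz_seq a (Suc (2 * Suc k)) = (res_lift ^^ Suc k) (Suc a)"
    using Suc by simp_all
qed simp_all

lemma syzygy_simple_funpow:
  assumes "\<forall>s<t. syz_seq a s < syz_seq a (Suc s)"
  shows "(syzygy n c ^^ t) (a mod n, 1) = (syz_seq a t mod n, syz_seq a (Suc t) - syz_seq a t)"
  using assms
proof (induction t)
  case (Suc t)
  then show ?case using syzygy_interval[of "syz_seq a t" "syz_seq a (Suc t)"] by simp
qed simp

lemma syzygy_simple_vanishes_iff:
  "snd ((syzygy n c ^^ t) (a mod n, 1)) = 0 \<longleftrightarrow> (\<exists>s\<le>t. syz_seq a s = syz_seq a (Suc s))"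
proof (induction t)
  case (Suc t)
  have ex_Suc: "(\<exists>s\<le>Suc t. syz_seq a s = syz_seq a (Suc s)) \<longleftrightarrow>
      (\<exists>s\<le>t. syz_seq a s = syz_seq a (Suc s)) \<or> syz_seq a (Suc t) = syz_seq a (Suc (Suc t))"
    by (auto simp: le_Suc_eq)
  show ?case
  proof (cases "\<exists>s\<le>t. syz_seq a s = syz_seq a (Suc s)")
    case True
    then have "snd ((syzygy n c ^^ t) (a mod n, 1)) = 0" using Suc.IH by blast
    then have "snd ((syzygy n c ^^ Suc t) (a mod n, 1)) = 0"
      by (cases "(syzygy n c ^^ t) (a mod n, 1)") (simp add: syzygy_zero)
    then show ?thesis using True ex_Suc by blast
  next
    case False
    then have "\<forall>s<Suc t. syz_seq a s < syz_seq a (Suc s)"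
      by (simp add: order_less_le syz_seq_mono less_Suc_eq_le)
    then show ?thesis
      using syzygy_simple_funpow[of "Suc t" a] False ex_Suc syz_seq_mono[of a "Suc t"] by auto
  qed
qed simp

lemma syz_seq_never_stalls:
  assumes "\<And>k. (res_lift ^^ k) a < (res_lift ^^ k) (Suc a)"
    and "\<And>k. (res_lift ^^ k) (Suc a) < (res_lift ^^ Suc k) a"
  shows "syz_seq a s < syz_seq a (Suc s)"
proof (cases "even s")
  case True
  then obtain k where "s = 2 * k" by blast
  then show ?thesis using assms(1) by (simp add: syz_seq_double syz_seq_double_Suc)
next
  case False
  then obtain k where "s = Suc (2 * k)" by (metis oddE Suc_eq_plus1)
  then show ?thesis using assms(2)[of k] by (simp add: syz_seq_double syz_seq_double_Suc)
qed

definition window_count :: "(nat \<Rightarrow> bool) \<Rightarrow> nat \<Rightarrow> nat \<Rightarrow> rat" where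
  "window_count P a b = (\<Sum>s\<in>{a..<b}. if P (s mod n) then 1 else 0)"

lemma window_count_split:
  "a \<le> b \<Longrightarrow> b \<le> d \<Longrightarrow> window_count P a d = window_count P a b + window_count P b d"
  unfolding window_count_def by (simp add: sum.atLeastLessThan_concat)

lemma window_count_res_lift:
  "window_count P x (res_lift x) = (\<Sum>k<c (x mod n). if P ((x mod n + k) mod n) then 1 else 0)"
  unfolding window_count_def res_lift_def
  by (simp add: sum.atLeastLessThan_shift_0[of _ x] atLeast0LessThan mod_add_left_eq)

lemma window_count_period: "window_count P a (a + n) = (\<Sum>r<n. if P r then 1 else 0)"
  unfolding window_count_def by (rule sum.reindex_bij_betw[OF bij_betw_mod_interval[OF n_pos]])

lemma cartan_entry:
  assumes "r < n" "j < n"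
  shows "cartan n c $$ (r, j) = (\<Sum>k<c r. if (r + k) mod n = j then 1 else 0)"
proof -
  have "cartan n c $$ (r, j) = of_nat (card {k\<in>{..<c r}. (r + k) mod n = j})"
    using assms by (simp add: cartan_def)
  also have "\<dots> = (\<Sum>k<c r. if (r + k) mod n = j then 1 else 0)"
    by (rule of_nat_card_filter_eq_sum) simp
  finally show ?thesis .
qed

lemma cartan_window:
  "j < n \<Longrightarrow> cartan n c $$ (x mod n, j) = window_count (\<lambda>r. r = j) x (res_lift x)"
  using n_pos by (simp add: cartan_entry window_count_res_lift)

lemma cartan_mult_row:
  fixes f :: "nat \<Rightarrow> rat"
  assumes "i < n"
  shows "(\<Sum>r<n. cartan n c $$ (i, r) * f r) = (\<Sum>k<c i. f ((i + k) mod n))"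
proof -
  have "(\<Sum>r<n. cartan n c $$ (i, r) * f r) = (\<Sum>r<n. \<Sum>k<c i. if (i + k) mod n = r then f r else 0)"
    using assms by (auto simp: cartan_entry sum_distrib_right intro!: sum.cong)
  also have "\<dots> = (\<Sum>k<c i. \<Sum>r<n. if (i + k) mod n = r then f r else 0)"
    by (rule sum.swap)
  also have "\<dots> = (\<Sum>k<c i. f ((i + k) mod n))"
    using n_pos by simp
  finally show ?thesis .
qed

definition cyclic_lift :: "nat \<Rightarrow> bool" where
  "cyclic_lift x \<longleftrightarrow> x mod n \<in> cyclic_vertices n c"

lemma res_map_less: "res_map n c i < n"
  using n_pos by (simp add: res_map_def)

lemma res_map_cyclic_vertex:
  assumes "r \<in> cyclic_vertices n c"
  shows "res_map n c r \<in> cyclic_vertices n c"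
proof -
  obtain k where "k \<ge> 1" "(res_map n c ^^ k) r = r"
    using assms unfolding cyclic_vertices_def by auto
  then have "(res_map n c ^^ k) (res_map n c r) = res_map n c r"
    by (metis funpow_swap1)
  then show ?thesis using \<open>k \<ge> 1\<close> res_map_less unfolding cyclic_vertices_def by auto
qed

lemma cyclic_lift_funpow_res_lift: "cyclic_lift x \<Longrightarrow> cyclic_lift ((res_lift ^^ k) x)"
  by (induction k) (simp_all add: cyclic_lift_def res_lift_mod res_map_cyclic_vertex)

definition merges :: "nat \<Rightarrow> nat \<Rightarrow> bool" where
  "merges x y \<longleftrightarrow> (\<exists>k. (res_lift ^^ k) x = (res_lift ^^ k) y)"

lemma merges_sym: "merges x y \<Longrightarrow> merges y x"
  unfolding merges_def by metis

lemma merges_trans: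
  assumes "merges x y" "merges y z"
  shows "merges x z"
proof -
  obtain k l where "(res_lift ^^ k) x = (res_lift ^^ k) y" "(res_lift ^^ l) y = (res_lift ^^ l) z"
    using assms unfolding merges_def by blast
  then have "(res_lift ^^ (l + k)) x = (res_lift ^^ (l + k)) y"
    and "(res_lift ^^ (k + l)) y = (res_lift ^^ (k + l)) z"
    by (simp_all add: funpow_add)
  then show ?thesis unfolding merges_def by (metis add.commute)
qed

lemma cyclic_lifts_merge_eq:
  assumes "cyclic_lift u" "cyclic_lift v" "merges u v"
  shows "u = v"
proof -
  obtain k where k: "(res_lift ^^ k) u = (res_lift ^^ k) v"
    using assms(3) unfolding merges_def by blast
  obtain p q where "(res_map n c ^^ p) (u mod n) = u mod n" "(res_map n c ^^ q) (v mod n) = v mod n"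
    and "1 \<le> p" "1 \<le> q"
    using assms(1,2) unfolding cyclic_lift_def cyclic_vertices_def by blast
  moreover have "(res_map n c ^^ k) (u mod n) = (res_map n c ^^ k) (v mod n)"
    using k by (metis funpow_res_lift_mod)
  ultimately have mod_eq: "u mod n = v mod n" by (rule funpow_eq_periodic_points)
  have "(res_lift ^^ k) u = (res_lift ^^ k) (u mod n) + u div n * n"
    using funpow_res_lift_add_mult[of k "u mod n" "u div n"] by simp
  moreover have "(res_lift ^^ k) v = (res_lift ^^ k) (v mod n) + v div n * n"
    using funpow_res_lift_add_mult[of k "v mod n" "v div n"] by simp
  ultimately have "u div n = v div n" using k mod_eq n_pos by simp
  with mod_eq show ?thesis by (metis div_mult_mod_eq)
qed

end

locale kupisch_finite_gldim = kupisch_series +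
  assumes finite_gldim: "finite_gldim n c"
begin

lemma syz_seq_stalls: "\<exists>s. syz_seq a s = syz_seq a (Suc s)"
proof -
  obtain d where "\<forall>i<n. \<forall>l\<in>{1..c i}. pd_le n c (i, l) d"
    using finite_gldim unfolding finite_gldim_def by blast
  then have "pd_le n c (a mod n, 1) d" using n_pos c_pos by simp
  then show ?thesis using syzygy_simple_vanishes_iff unfolding pd_le_def by blast
qed

definition proj_res_length :: "nat \<Rightarrow> nat" where
  "proj_res_length a = (LEAST s. syz_seq a s = syz_seq a (Suc s))"

lemma syz_seq_proj_res_length: "syz_seq a (proj_res_length a) = syz_seq a (Suc (proj_res_length a))"
  unfolding proj_res_length_def by (rule LeastI_ex) (rule syz_seq_stalls)

lemma proj_res_length_le: "syz_seq a s = syz_seq a (Suc s) \<Longrightarrow> proj_res_length a \<le> s"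
  unfolding proj_res_length_def by (rule Least_le)

lemma proj_res_length_pos: "0 < proj_res_length a"
proof (rule gr0I)
  assume "proj_res_length a = 0"
  with syz_seq_proj_res_length[of a] show False by simp
qed

lemma proj_dim_simple: "proj_dim n c (a mod n, 1) = proj_res_length a - 1"
proof -
  have "pd_le n c (a mod n, 1) d \<longleftrightarrow> proj_res_length a \<le> Suc d" for d
    unfolding pd_le_def syzygy_simple_vanishes_iff
  proof
    assume "\<exists>s\<le>Suc d. syz_seq a s = syz_seq a (Suc s)"
    then show "proj_res_length a \<le> Suc d" using proj_res_length_le order.trans by blast
  next
    assume "proj_res_length a \<le> Suc d"
    then show "\<exists>s\<le>Suc d. syz_seq a s = syz_seq a (Suc s)" using syz_seq_proj_res_length by blast
  qed
  then show ?thesis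
    unfolding proj_dim_def using proj_res_length_pos[of a] by (intro Least_equality) auto
qed

lemma simples_even_pd_eq: "simples_even_pd n c = {i. i < n \<and> odd (proj_res_length i)}"
proof -
  have "even (proj_dim n c (i, 1)) \<longleftrightarrow> odd (proj_res_length i)" if "i < n" for i
    using proj_dim_simple[of i] proj_res_length_pos[of i] that
    by (cases "proj_res_length i") auto
  then show ?thesis unfolding simples_even_pd_def by auto
qed

text \<open>Row \<open>i\<close> is the alternating sum of the projective covers in the minimal projective resolution
of \<open>S\<^bsub>i\<^esub>\<close>, i.e. the class of \<open>S\<^bsub>i\<^esub>\<close> in the Grothendieck group in the basis of the projectives.\<close>

definition proj_res_mat :: "rat mat" where
  "proj_res_mat = mat n n (\<lambda>(i, r).
     \<Sum>t<proj_res_length i. (-1) ^ t * (if syz_seq i t mod n = r then 1 else 0))"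

lemma proj_res_mat_carrier: "proj_res_mat \<in> carrier_mat n n"
  by (simp add: proj_res_mat_def)

lemma proj_res_mat_mult_cartan: "proj_res_mat * cartan n c = 1\<^sub>m n"
proof (rule eq_matI)
  fix i j assume "i < dim_row (1\<^sub>m n)" "j < dim_col (1\<^sub>m n)"
  then have i: "i < n" and j: "j < n" by simp_all
  define g where "g t = window_count (\<lambda>r. r = j) (syz_seq i t) (syz_seq i (Suc t))" for t
  have "(proj_res_mat * cartan n c) $$ (i, j) = (\<Sum>r<n. proj_res_mat $$ (i, r) * cartan n c $$ (r, j))"
    using i j by (simp add: proj_res_mat_def cartan_def scalar_prod_def lessThan_atLeast0)
  also have "\<dots> = (\<Sum>r<n. \<Sum>t<proj_res_length i.
      (-1) ^ t * (if syz_seq i t mod n = r then cartan n c $$ (r, j) else 0))"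
    using i by (auto simp: proj_res_mat_def sum_distrib_right intro!: sum.cong)
  also have "\<dots> = (\<Sum>t<proj_res_length i. \<Sum>r<n.
      (-1) ^ t * (if syz_seq i t mod n = r then cartan n c $$ (r, j) else 0))"
    by (rule sum.swap)
  also have "\<dots> = (\<Sum>t<proj_res_length i. (-1) ^ t * cartan n c $$ (syz_seq i t mod n, j))"
    using n_pos by (simp flip: sum_distrib_left)
  also have "\<dots> = (\<Sum>t<proj_res_length i. (-1) ^ t * (g t + g (Suc t)))"
    using j window_count_split[OF syz_seq_mono syz_seq_mono]
    by (simp add: cartan_window g_def)
  also have "\<dots> = g 0 - (-1) ^ proj_res_length i * g (proj_res_length i)"
    by (rule sum_alternating_telescope)
  also have "\<dots> = g 0"
    using syz_seq_proj_res_length[of i] by (simp add: g_def window_count_def)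
  also have "\<dots> = 1\<^sub>m n $$ (i, j)"
    using i j by (simp add: g_def window_count_def)
  finally show "(proj_res_mat * cartan n c) $$ (i, j) = 1\<^sub>m n $$ (i, j)" .
qed (simp_all add: proj_res_mat_def cartan_def)

lemma cartan_mult_proj_res_mat: "cartan n c * proj_res_mat = 1\<^sub>m n"
  by (rule mat_mult_left_right_inverse[OF proj_res_mat_carrier _ proj_res_mat_mult_cartan])
    (simp add: cartan_def)

lemma cartan_invertible: "invertible_mat (cartan n c)"
  unfolding invertible_mat_def inverts_mat_def
  using cartan_mult_proj_res_mat proj_res_mat_mult_cartan proj_res_mat_carrier
  by (auto simp: cartan_def)

lemma proj_res_mat_row_sum:
  assumes "i < n"
  shows "(\<Sum>j<n. proj_res_mat $$ (i, j)) = (if i \<in> simples_even_pd n c then 1 else 0)"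
proof -
  have "(\<Sum>j<n. proj_res_mat $$ (i, j)) =
      (\<Sum>j<n. \<Sum>t<proj_res_length i. (-1) ^ t * (if syz_seq i t mod n = j then 1 else 0))"
    using assms by (simp add: proj_res_mat_def)
  also have "\<dots> = (\<Sum>t<proj_res_length i. \<Sum>j<n. (-1) ^ t * (if syz_seq i t mod n = j then 1 else 0))"
    by (rule sum.swap)
  also have "\<dots> = (\<Sum>t<proj_res_length i. (-1) ^ t)"
    using n_pos by (simp flip: sum_distrib_left)
  also have "\<dots> = (if odd (proj_res_length i) then 1 else 0)"
    by (rule sum_neg_one_power_lessThan)
  finally show ?thesis using assms by (simp add: simples_even_pd_eq)
qed

lemma sum_lessThan_simples_even_pd:
  "(\<Sum>r<n. if r \<in> simples_even_pd n c then 1 else 0) = (of_nat (card (simples_even_pd n c)) :: rat)"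
proof -
  have "simples_even_pd n c = {r\<in>{..<n}. r \<in> simples_even_pd n c}"
    by (auto simp: simples_even_pd_def)
  then show ?thesis by (metis finite_lessThan of_nat_card_filter_eq_sum)
qed

theorem magnitude_eq_card_simples_even_pd: "magnitude n c = of_nat (card (simples_even_pd n c))"
proof -
  have "magnitude n c = (\<Sum>i<n. \<Sum>j<n. proj_res_mat $$ (i, j))"
    unfolding magnitude_def Let_def
    using some_inverse_mat_eq[OF _ proj_res_mat_carrier cartan_mult_proj_res_mat proj_res_mat_mult_cartan]
    by (simp add: cartan_def)
  also have "\<dots> = (\<Sum>i<n. if i \<in> simples_even_pd n c then 1 else 0)"
    by (rule sum.cong) (simp_all add: proj_res_mat_row_sum)
  finally show ?thesis by (simp add: sum_lessThan_simples_even_pd)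
qed

lemma window_count_simples_even_pd_res_lift:
  "window_count (\<lambda>r. r \<in> simples_even_pd n c) x (res_lift x) = 1"
proof -
  let ?i = "x mod n" and ?E = "simples_even_pd n c"
  have i: "?i < n" using n_pos by simp
  have "1 = (\<Sum>j<n. (cartan n c * proj_res_mat) $$ (?i, j))"
    using cartan_mult_proj_res_mat i by simp
  also have "\<dots> = (\<Sum>j<n. \<Sum>r<n. cartan n c $$ (?i, r) * proj_res_mat $$ (r, j))"
    using i by (simp add: proj_res_mat_def cartan_def scalar_prod_def lessThan_atLeast0)
  also have "\<dots> = (\<Sum>r<n. cartan n c $$ (?i, r) * (\<Sum>j<n. proj_res_mat $$ (r, j)))"
    unfolding sum_distrib_left by (rule sum.swap)
  also have "\<dots> = (\<Sum>r<n. cartan n c $$ (?i, r) * (if r \<in> ?E then 1 else 0))"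
    by (rule sum.cong) (simp_all add: proj_res_mat_row_sum)
  also have "\<dots> = (\<Sum>k<c ?i. if (?i + k) mod n \<in> ?E then 1 else 0)"
    using i by (rule cartan_mult_row)
  also have "\<dots> = window_count (\<lambda>r. r \<in> ?E) x (res_lift x)"
    by (simp add: window_count_res_lift)
  finally show ?thesis by simp
qed

lemma window_count_simples_even_pd_funpow:
  "window_count (\<lambda>r. r \<in> simples_even_pd n c) x ((res_lift ^^ k) x) = of_nat k"
proof (induction k)
  case (Suc k)
  have "x \<le> (res_lift ^^ k) x" "(res_lift ^^ k) x \<le> res_lift ((res_lift ^^ k) x)"
    using le_funpow_res_lift[of x k] less_res_lift[of "(res_lift ^^ k) x"] by simp_all
  from window_count_split[OF this] show ?case
    using Suc.IH window_count_simples_even_pd_res_lift by simp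
qed (simp add: window_count_def)

text \<open>If \<open>u \<noteq> v\<close>, the last point \<open>i\<close> of \<open>[v, u)\<close> whose orbit merges with that of \<open>v\<close> has its orbit
interleaved strictly with that of \<open>i + 1\<close> forever, so \<open>S\<^bsub>i mod n\<^esub>\<close> has infinite projective
dimension.\<close>

lemma no_cyclic_lift_between:
  assumes v: "cyclic_lift v" and u: "cyclic_lift u" and "v \<le> u" "u < res_lift v"
  shows "u = v"
proof (rule ccontr)
  assume "u \<noteq> v"
  then have "\<not> merges u v" using cyclic_lifts_merge_eq u v by blast
  moreover have "merges v v" unfolding merges_def by blast
  ultimately obtain i where i: "v \<le> i" "i < u" "merges i v" "\<not> merges (Suc i) v"
    using exists_crossing_nat[of v u "\<lambda>x. merges x v"] \<open>v \<le> u\<close> by blast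
  have "\<not> merges i (Suc i)"
  proof
    assume "merges i (Suc i)"
    then have "merges (Suc i) v" using merges_trans[OF merges_sym i(3)] by blast
    with i(4) show False by contradiction
  qed
  have lt1: "(res_lift ^^ k) i < (res_lift ^^ k) (Suc i)" for k
  proof -
    have "(res_lift ^^ k) i \<le> (res_lift ^^ k) (Suc i)"
      by (intro funpow_mono mono_res_lift) simp
    moreover have "(res_lift ^^ k) i \<noteq> (res_lift ^^ k) (Suc i)"
      using \<open>\<not> merges i (Suc i)\<close> unfolding merges_def by blast
    ultimately show ?thesis by simp
  qed
  have lt2: "(res_lift ^^ k) (Suc i) < (res_lift ^^ Suc k) i" for k
  proof -
    have "\<not> merges (res_lift v) u"
      using cyclic_lifts_merge_eq[OF cyclic_lift_funpow_res_lift[OF v, of 1] u] \<open>u < res_lift v\<close>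
      by auto
    then have ne: "(res_lift ^^ k) u \<noteq> (res_lift ^^ k) (res_lift v)"
      unfolding merges_def by metis
    have "(res_lift ^^ k) (Suc i) \<le> (res_lift ^^ k) u"
      using i(2) by (intro funpow_mono mono_res_lift) simp
    also have "\<dots> < (res_lift ^^ k) (res_lift v)"
      using ne funpow_mono[OF mono_res_lift, of u "res_lift v" k] \<open>u < res_lift v\<close> by simp
    also have "\<dots> \<le> (res_lift ^^ k) (res_lift i)"
      using i(1) by (intro funpow_mono mono_res_lift monoD[OF mono_res_lift])
    also have "\<dots> = (res_lift ^^ Suc k) i"
      by (simp add: funpow_swap1)
    finally show ?thesis .
  qed
  obtain s where "syz_seq i s = syz_seq i (Suc s)" using syz_seq_stalls by blast
  with syz_seq_never_stalls[OF lt1 lt2, of s] show False by simp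
qed

lemma cyclic_lift_in_orbit:
  assumes "cyclic_lift v" "cyclic_lift u" "v \<le> u"
  shows "\<exists>j. (res_lift ^^ j) v = u"
proof -
  have "\<not> (res_lift ^^ Suc u) v \<le> u" using le_funpow_res_lift[of v "Suc u"] by simp
  then obtain j where "(res_lift ^^ j) v \<le> u" "u < res_lift ((res_lift ^^ j) v)"
    using exists_crossing_nat[of 0 "Suc u" "\<lambda>j. (res_lift ^^ j) v \<le> u"] assms(3) by auto
  then have "u = (res_lift ^^ j) v"
    using no_cyclic_lift_between[OF cyclic_lift_funpow_res_lift[OF assms(1), of j] assms(2)] by simp
  then show ?thesis by blast
qed

lemma card_cyclic_vertices_eq_orbit_length:
  assumes v: "cyclic_lift v" "v < n" and P: "(res_lift ^^ P) v = v + n"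
  shows "card (cyclic_vertices n c) = P"
proof -
  define orbit where "orbit = (\<lambda>j. (res_lift ^^ j) v) ` {..<P}"
  have orbit_lt: "(res_lift ^^ j) v < v + n \<longleftrightarrow> j < P" for j
    using strict_mono_less[OF strict_mono_funpow_res_lift[of v], of j P] P by simp
  have "orbit \<subseteq> {v..<v + n}"
  proof
    fix x assume "x \<in> orbit"
    then obtain j where "j < P" "x = (res_lift ^^ j) v" unfolding orbit_def by blast
    then show "x \<in> {v..<v + n}" using orbit_lt[of j] le_funpow_res_lift[of v j] by simp
  qed
  then have inj_mod: "inj_on (\<lambda>x. x mod n) orbit"
    by (rule inj_on_subset[OF bij_betw_imp_inj_on[OF bij_betw_mod_interval[OF n_pos]]])
  have card_orbit: "card orbit = P"
    unfolding orbit_def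
    using strict_mono_imp_inj_on[OF strict_mono_funpow_res_lift] by (simp add: card_image)
  have "(\<lambda>x. x mod n) ` orbit = cyclic_vertices n c"
  proof
    show "(\<lambda>x. x mod n) ` orbit \<subseteq> cyclic_vertices n c"
      using cyclic_lift_funpow_res_lift[OF v(1)] unfolding orbit_def cyclic_lift_def by auto
  next
    show "cyclic_vertices n c \<subseteq> (\<lambda>x. x mod n) ` orbit"
    proof
      fix r assume r: "r \<in> cyclic_vertices n c"
      then have "r < n" by (simp add: cyclic_vertices_def)
      define u where "u = (if v \<le> r then r else r + n)"
      have u: "v \<le> u" "u < v + n" "u mod n = r"
        using \<open>v < n\<close> \<open>r < n\<close> unfolding u_def by auto
      then obtain j where "(res_lift ^^ j) v = u"
        using cyclic_lift_in_orbit[OF v(1), of u] r by (auto simp: cyclic_lift_def)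
      then show "r \<in> (\<lambda>x. x mod n) ` orbit"
        using u orbit_lt unfolding orbit_def by auto
    qed
  qed
  then show ?thesis using card_image[OF inj_mod] card_orbit by simp
qed

theorem card_cyclic_vertices_eq_card_simples_even_pd:
  "card (cyclic_vertices n c) = card (simples_even_pd n c)"
proof -
  obtain v where "v < n" "\<exists>k\<ge>1. (res_map n c ^^ k) v = v"
    using exists_periodic_point[of n "res_map n c"] n_pos res_map_less by blast
  then have v: "cyclic_lift v" by (simp add: cyclic_vertices_def cyclic_lift_def)
  obtain P where P: "(res_lift ^^ P) v = v + n"
    using cyclic_lift_in_orbit[OF v, of "v + n"] v by (auto simp: cyclic_lift_def)
  have "card (cyclic_vertices n c) = P"
    using v \<open>v < n\<close> P by (rule card_cyclic_vertices_eq_orbit_length)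
  moreover have "(of_nat P :: rat) = of_nat (card (simples_even_pd n c))"
    using window_count_simples_even_pd_funpow[of v P] window_count_period[of _ v]
    by (simp add: P sum_lessThan_simples_even_pd)
  ultimately show ?thesis by simp
qed

end

theorem proposition4p2:
  fixes n :: nat and c :: "nat \<Rightarrow> nat"
  assumes "nakayama_kupisch n c"
    and "finite_gldim n c"
  shows "invertible_mat (cartan n c)
     \<and> magnitude n c = of_nat (card (simples_even_pd n c))
     \<and> magnitude n c = of_nat (card (cyclic_vertices n c))"
proof -
  interpret kupisch_finite_gldim n c
    using kupisch_series_if_nakayama_kupisch[OF assms(1)] assms(2)
    by (simp add: kupisch_finite_gldim_def kupisch_finite_gldim_axioms_def)
  show ?thesis
    using cartan_invertible magnitude_eq_card_simples_even_pd
      card_cyclic_vertices_eq_card_simples_even_pd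
    by simp
qed

end
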